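(* Let $\langle A;\cdot\rangle$ be a groupoid with an identity element $1$ (i.e. $1\cdot a=a\cdot 1=a$ for all $a\in A$). Then $\langle A;\cdot\rangle$ is an Abelian algebra if and only if $\langle A;\cdot\rangle$ is a commutative semigroup such that for all $a,b\in A$ the equation $a\cdot x=b$ has at most one solution $x\in A$.
   Context: A groupoid is an algebra $\langle A;\cdot\rangle$ with one binary operation. A polynomial operation of an algebra is an operation obtained from a term by substituting elements of the algebra for some of its variables. An algebra is called Abelian if for every polynomial operation $t(x,y_1,\ldots,y_n)$ and all elements $u,v,c_1,\ldots,c_n,d_1,\ldots,d_n$ of the algebra, $t(u,c_1,\ldots,c_n)=t(u,d_1,\ldots,d_n)$ implies $t(v,c_1,\ldots,c_n)=t(v,d_1,\ldots,d_n)$. *)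

theory Defs
  imports Main
begin

text \<open>Variables are indexed by natural numbers; variable 0 plays the role of x,
  the remaining variables play the role of y_1, ..., y_n.\<close>
datatype 'a pterm = Var nat | Cst 'a | Mul "'a pterm" "'a pterm"

fun peval :: "('a \<Rightarrow> 'a \<Rightarrow> 'a) \<Rightarrow> (nat \<Rightarrow> 'a) \<Rightarrow> 'a pterm \<Rightarrow> 'a" where
  "peval m \<rho> (Var i) = \<rho> i"
| "peval m \<rho> (Cst a) = a"
| "peval m \<rho> (Mul s t) = m (peval m \<rho> s) (peval m \<rho> t)"

definition abelian_groupoid :: "('a \<Rightarrow> 'a \<Rightarrow> 'a) \<Rightarrow> bool" where
  "abelian_groupoid m \<longleftrightarrow>
     (\<forall>(t :: 'a pterm) u v (c :: nat \<Rightarrow> 'a) d.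
        peval m (c(0 := u)) t = peval m (d(0 := u)) t \<longrightarrow>
        peval m (c(0 := v)) t = peval m (d(0 := v)) t)"

end

theory Submission
  imports Defs
begin

text \<open>In a unital Abelian groupoid, suitable instances of the term condition with one of the
  inputs equal to the unit yield commutativity, associativity and left cancellation.
  Conversely, in a commutative monoid every polynomial evaluates to \<open>x\<^sup>k \<cdot> p\<close>, where
  \<open>k\<close> counts the occurrences of \<open>x\<close> and \<open>p\<close> is the value at \<open>x = 1\<close>; so an equality at
  \<open>x = u\<close> can be cancelled down to \<open>x = 1\<close> and then multiplied back up to any \<open>x = v\<close>.\<close>

lemma abelian_groupoidD:
  assumes "abelian_groupoid m"
    and "peval m (c(0 := u)) t = peval m (d(0 := u)) t"
  shows "peval m (c(0 := v)) t = peval m (d(0 := v)) t"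
  using assms unfolding abelian_groupoid_def by blast

lemma abelian_unital_groupoid_commute:
  assumes ab: "abelian_groupoid m"
    and left_unit: "\<And>a. m e a = a" and right_unit: "\<And>a. m a e = a"
  shows "m a b = m b a"
proof -
  have "m (m e a) b = m (m e b) a"
    using abelian_groupoidD[OF ab, of "\<lambda>i. if i = 1 then e else b" e
        "Mul (Mul (Var 1) (Var 0)) (Var 2)" "\<lambda>i. if i = 1 then b else e" a]
    by (simp add: left_unit right_unit)
  then show ?thesis by (simp add: left_unit)
qed

lemma abelian_unital_groupoid_assoc:
  assumes ab: "abelian_groupoid m"
    and left_unit: "\<And>a. m e a = a" and right_unit: "\<And>a. m a e = a"
  shows "m (m a b) c = m a (m b c)"
proof -
  have "m a (m c b) = m (m a b) c"
    using abelian_groupoidD[OF ab, of "\<lambda>i. if i = 1 then a else b" e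
        "Mul (Var 1) (Mul (Var 0) (Var 2))" "\<lambda>i. if i = 1 then m a b else e" c]
    by (simp add: left_unit right_unit)
  then show ?thesis
    using abelian_unital_groupoid_commute[OF assms] by metis
qed

lemma abelian_unital_groupoid_left_cancel:
  assumes ab: "abelian_groupoid m"
    and left_unit: "\<And>a. m e a = a"
    and "m a x = m a y"
  shows "x = y"
  using abelian_groupoidD[OF ab, of "\<lambda>_. x" a "Mul (Var 0) (Var 1)" "\<lambda>_. y" e] assms
  by (simp add: left_unit)

fun var0_count :: "'a pterm \<Rightarrow> nat" where
  "var0_count (Var i) = (if i = 0 then 1 else 0)"
| "var0_count (Cst a) = 0"
| "var0_count (Mul s t) = var0_count s + var0_count t"

lemma (in monoid) funpow_mult_unit_add:
  "((\<^bold>*) u ^^ (i + j)) \<^bold>1 = ((\<^bold>*) u ^^ i) \<^bold>1 \<^bold>* ((\<^bold>*) u ^^ j) \<^bold>1"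
  by (induction i) (simp_all add: assoc)

lemma (in comm_monoid) peval_upd_var0:
  "peval (\<^bold>*) (c(0 := u)) t = ((\<^bold>*) u ^^ var0_count t) \<^bold>1 \<^bold>* peval (\<^bold>*) (c(0 := \<^bold>1)) t"
proof (induction t)
  case (Mul s t)
  let ?P = "((\<^bold>*) u ^^ var0_count s) \<^bold>1" and ?Q = "((\<^bold>*) u ^^ var0_count t) \<^bold>1"
  let ?S = "peval (\<^bold>*) (c(0 := \<^bold>1)) s" and ?T = "peval (\<^bold>*) (c(0 := \<^bold>1)) t"
  have "peval (\<^bold>*) (c(0 := u)) (Mul s t) = (?P \<^bold>* ?S) \<^bold>* (?Q \<^bold>* ?T)"
    by (simp only: peval.simps Mul.IH)
  also have "\<dots> = (?P \<^bold>* ?Q) \<^bold>* (?S \<^bold>* ?T)"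
    by (simp only: ac_simps)
  also have "\<dots> = ((\<^bold>*) u ^^ (var0_count s + var0_count t)) \<^bold>1 \<^bold>* (?S \<^bold>* ?T)"
    by (simp only: funpow_mult_unit_add)
  finally show ?case
    by (simp only: peval.simps var0_count.simps)
qed (simp_all add: comm_neutral)

lemma (in comm_monoid) abelian_groupoid_if_left_cancel:
  assumes left_cancel: "\<And>a x y. a \<^bold>* x = a \<^bold>* y \<Longrightarrow> x = y"
  shows "abelian_groupoid (\<^bold>*)"
  unfolding abelian_groupoid_def
proof (intro allI impI)
  fix t u v and c d :: "nat \<Rightarrow> 'a"
  assume "peval (\<^bold>*) (c(0 := u)) t = peval (\<^bold>*) (d(0 := u)) t"
  then have "peval (\<^bold>*) (c(0 := \<^bold>1)) t = peval (\<^bold>*) (d(0 := \<^bold>1)) t"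
    by (simp only: peval_upd_var0[of c u] peval_upd_var0[of d u] left_cancel)
  then show "peval (\<^bold>*) (c(0 := v)) t = peval (\<^bold>*) (d(0 := v)) t"
    by (simp only: peval_upd_var0[of c v] peval_upd_var0[of d v])
qed

theorem mainTheorem1:
  fixes m :: "'a \<Rightarrow> 'a \<Rightarrow> 'a" and e :: 'a
  assumes unit: "\<forall>a. m e a = a \<and> m a e = a"
  shows "abelian_groupoid m \<longleftrightarrow>
    ((\<forall>a b c. m (m a b) c = m a (m b c)) \<and>
     (\<forall>a b. m a b = m b a) \<and>
     (\<forall>a b x y. m a x = b \<and> m a y = b \<longrightarrow> x = y))"
proof
  assume ab: "abelian_groupoid m"
  have left_unit: "\<And>a. m e a = a" and right_unit: "\<And>a. m a e = a"
    using unit by simp_all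
  show "(\<forall>a b c. m (m a b) c = m a (m b c)) \<and> (\<forall>a b. m a b = m b a) \<and>
      (\<forall>a b x y. m a x = b \<and> m a y = b \<longrightarrow> x = y)"
    using abelian_unital_groupoid_assoc[OF ab left_unit right_unit]
      abelian_unital_groupoid_commute[OF ab left_unit right_unit]
      abelian_unital_groupoid_left_cancel[OF ab left_unit]
    by blast
next
  assume "(\<forall>a b c. m (m a b) c = m a (m b c)) \<and> (\<forall>a b. m a b = m b a) \<and>
      (\<forall>a b x y. m a x = b \<and> m a y = b \<longrightarrow> x = y)"
  then have assoc: "\<And>a b c. m (m a b) c = m a (m b c)" and commute: "\<And>a b. m a b = m b a"
    and left_cancel: "\<And>a x y. m a x = m a y \<Longrightarrow> x = y"
    by blast+
  interpret comm_monoid m e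
    by unfold_locales (use assoc commute unit in blast)+
  show "abelian_groupoid m"
    using left_cancel by (rule abelian_groupoid_if_left_cancel)
qed

end
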